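(* Let $E$ be a row-finite source-free directed graph which contains a cycle without entrance, and let $(X, \mu)$ be a $\sigma$-finite measure space carrying an $E$-semibranching function system. If a $\Lambda$-projective representation of $C^*(E)$ on $L^2(X, \mu)$ arising from this system is monic, then for every vertex $v$ lying on a cycle without entrance, $D_v$ has no measurable subset $X_v$ with $0 < \mu(X_v) < \mu(D_v)$.
   Context: A directed graph $E$ is viewed as a 1-graph (category of finite paths, degree = length); row-finite: each vertex receives finitely many edges; source-free: each vertex receives at least one edge. A path $e_1e_2\cdots e_n$ has $s(e_i)=r(e_{i+1})$; it is a cycle if $s(e_n)=r(e_1)$; a cycle has an entrance if there are $i\le n$ and an edge $e$ with $r(e)=s(e_i)$ but $e\ne e_{i+1}$. $C^*(E)$ is the graph $C^*$-algebra (universal $C^*$-algebra of a Cuntz–Krieger family for the 1-graph). An $E$-semibranching function system on $(X,\mu)$: measurable sets $D_\lambda$, prefixing maps $\tau_\lambda:D_\lambda\to X$ for paths $\lambda$, ranges $R_\lambda$, coding maps $\tau^m$ ($m\in\mathbb{N}$), such that for each $m$ $\{\tau_\lambda: |\lambda|=m\}$ is a semibranching function system with coding map $\tau^m$ ($0<\mu(D_\lambda)<\infty$, ranges of finite measure, a.e. disjoint, covering $X$ a.e., $d(\mu\circ\tau_\lambda)/d\mu>0$ a.e., $\tau^m\circ\tau_\lambda=\mathrm{id}$), $\tau_v=\mathrm{id}$ for vertices, $\tau_\lambda\tau_\nu=\tau_{\lambda\nu}$ a.e., $\tau^m\tau^n=\tau^{m+n}$. A $\Lambda$-projective representation arising from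 it is $T_\lambda f=f_\lambda\cdot(f\circ\tau^{|\lambda|})$ for functions $f_\lambda\in L^2$ with $0\ne d(\mu\circ\tau_\lambda^{-1})/d\mu=|f_\lambda|^2$ and $f_\lambda(f_\nu\circ\tau^{|\lambda|})=f_{\lambda\nu}$. Monic: all $T_\lambda\ne0$ and some $\xi$ has $\overline{\mathrm{span}}\{T_\lambda T_\lambda^*\xi\}=L^2(X,\mu)$. *)

theory Defs
  imports "HOL-Analysis.Analysis"
begin

text \<open>A directed graph E has vertex set UNIV :: 'v set and edge set UNIV :: 'e set,
  with range map r and source map s. A finite path is a pair (v, [e1,...,en]):
  for n = 0 it is the vertex v; for n > 0 we require v = r e1 and s ei = r e(i+1).\<close>

type_synonym ('v,'e) gpath = "'v \<times> 'e list"

definition is_path :: "('e \<Rightarrow> 'v) \<Rightarrow> ('e \<Rightarrow> 'v) \<Rightarrow> ('v,'e) gpath \<Rightarrow> bool" where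
  "is_path r s p \<longleftrightarrow>
     (snd p \<noteq> [] \<longrightarrow> fst p = r (hd (snd p))) \<and>
     (\<forall>i. Suc i < length (snd p) \<longrightarrow> s (snd p ! i) = r (snd p ! Suc i))"

definition plen :: "('v,'e) gpath \<Rightarrow> nat" where
  "plen p = length (snd p)"

definition psource :: "('e \<Rightarrow> 'v) \<Rightarrow> ('v,'e) gpath \<Rightarrow> 'v" where
  "psource s p = (if snd p = [] then fst p else s (last (snd p)))"

text \<open>Concatenation lambda nu (meaningful when s(lambda) = r(nu)).\<close>
definition pcomp :: "('v,'e) gpath \<Rightarrow> ('v,'e) gpath \<Rightarrow> ('v,'e) gpath" where
  "pcomp p q = (fst p, snd p @ snd q)"

definition composable :: "('e \<Rightarrow> 'v) \<Rightarrow> ('e \<Rightarrow> 'v) \<Rightarrow> ('v,'e) gpath \<Rightarrow> ('v,'e) gpath \<Rightarrow> bool" where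
  "composable r s p q \<longleftrightarrow> is_path r s p \<and> is_path r s q \<and> psource s p = fst q"

definition row_finite :: "('e \<Rightarrow> 'v) \<Rightarrow> bool" where
  "row_finite r \<longleftrightarrow> (\<forall>v. finite {e. r e = v})"

definition source_free :: "('e \<Rightarrow> 'v) \<Rightarrow> bool" where
  "source_free r \<longleftrightarrow> (\<forall>v. {e. r e = v} \<noteq> {})"

text \<open>A cycle e1...en (list es, 0-indexed) and entrances (indices read cyclically,
  so e_{n+1} = e_1).\<close>
definition is_cycle :: "('e \<Rightarrow> 'v) \<Rightarrow> ('e \<Rightarrow> 'v) \<Rightarrow> 'e list \<Rightarrow> bool" where
  "is_cycle r s es \<longleftrightarrow> es \<noteq> [] \<and> is_path r s (r (hd es), es) \<and> s (last es) = r (hd es)"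

definition has_entrance :: "('e \<Rightarrow> 'v) \<Rightarrow> ('e \<Rightarrow> 'v) \<Rightarrow> 'e list \<Rightarrow> bool" where
  "has_entrance r s es \<longleftrightarrow>
     (\<exists>i < length es. \<exists>e. r e = s (es ! i) \<and> e \<noteq> es ! (Suc i mod length es))"

definition on_cycle_without_entrance :: "('e \<Rightarrow> 'v) \<Rightarrow> ('e \<Rightarrow> 'v) \<Rightarrow> 'v \<Rightarrow> bool" where
  "on_cycle_without_entrance r s v \<longleftrightarrow>
     (\<exists>es. is_cycle r s es \<and> \<not> has_entrance r s es \<and> v \<in> r ` set es)"

text \<open>d(mu o tau)/d mu exists and is positive a.e. on D.\<close>
definition pos_RN_deriv :: "'x measure \<Rightarrow> 'x set \<Rightarrow> ('x \<Rightarrow> 'x) \<Rightarrow> bool" where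
  "pos_RN_deriv M D t \<longleftrightarrow>
     (\<exists>\<Phi> \<in> borel_measurable M. (AE x in M. x \<in> D \<longrightarrow> 0 < \<Phi> x) \<and>
        (\<forall>A \<in> sets M. A \<subseteq> D \<longrightarrow> t ` A \<in> sets M \<and>
            emeasure M (t ` A) = (\<integral>\<^sup>+x\<in>A. \<Phi> x \<partial>M)))"

definition sbfs :: "'x measure \<Rightarrow> 'i set \<Rightarrow> ('i \<Rightarrow> 'x set) \<Rightarrow> ('i \<Rightarrow> 'x \<Rightarrow> 'x)
                     \<Rightarrow> ('x \<Rightarrow> 'x) \<Rightarrow> bool" where
  "sbfs M I D t cod \<longleftrightarrow>
     (\<forall>i\<in>I. D i \<in> sets M \<and> 0 < emeasure M (D i) \<and> emeasure M (D i) < \<infinity>) \<and>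
     (\<forall>i\<in>I. t i \<in> measurable (restrict_space M (D i)) M) \<and>
     (\<forall>i\<in>I. t i ` D i \<in> sets M \<and> emeasure M (t i ` D i) < \<infinity>) \<and>
     (\<forall>i\<in>I. \<forall>j\<in>I. i \<noteq> j \<longrightarrow> emeasure M (t i ` D i \<inter> t j ` D j) = 0) \<and>
     (AE x in M. \<exists>i\<in>I. x \<in> t i ` D i) \<and>
     (\<forall>i\<in>I. pos_RN_deriv M (D i) (t i)) \<and>
     cod \<in> measurable M M \<and>
     (\<forall>i\<in>I. AE x in M. x \<in> D i \<longrightarrow> cod (t i x) = x)"

text \<open>An E-semibranching function system.  The condition tau_lambda tau_nu = tau_{lambda nu}
  a.e. is read as equality a.e. of partial maps (same domain a.e., same values a.e.).\<close>
definition E_sbfs :: "('e \<Rightarrow> 'v) \<Rightarrow> ('e \<Rightarrow> 'v) \<Rightarrow> 'x measure \<Rightarrow> (('v,'e) gpath \<Rightarrow> 'x set)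
     \<Rightarrow> (('v,'e) gpath \<Rightarrow> 'x \<Rightarrow> 'x) \<Rightarrow> (nat \<Rightarrow> 'x \<Rightarrow> 'x) \<Rightarrow> bool" where
  "E_sbfs r s M D t cod \<longleftrightarrow>
     (\<forall>m. sbfs M {p. is_path r s p \<and> plen p = m} D t (cod m)) \<and>
     (\<forall>v. \<forall>x \<in> D (v, []). t (v, []) x = x) \<and>
     (\<forall>p q. composable r s p q \<longrightarrow>
        (AE x in M. (x \<in> D (pcomp p q) \<longleftrightarrow> x \<in> D q \<and> t q x \<in> D p) \<and>
                    (x \<in> D (pcomp p q) \<longrightarrow> t p (t q x) = t (pcomp p q) x))) \<and>
     (\<forall>m n. \<forall>x \<in> space M. cod m (cod n x) = cod (m + n) x)"

definition L2 :: "'x measure \<Rightarrow> ('x \<Rightarrow> complex) set" where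
  "L2 M = {g. g \<in> borel_measurable M \<and> integrable M (\<lambda>x. (cmod (g x))\<^sup>2)}"

definition Top :: "(nat \<Rightarrow> 'x \<Rightarrow> 'x) \<Rightarrow> (('v,'e) gpath \<Rightarrow> 'x \<Rightarrow> complex)
     \<Rightarrow> ('v,'e) gpath \<Rightarrow> ('x \<Rightarrow> complex) \<Rightarrow> 'x \<Rightarrow> complex" where
  "Top cod f p g = (\<lambda>x. f p x * g (cod (plen p) x))"

definition proj_rep :: "('e \<Rightarrow> 'v) \<Rightarrow> ('e \<Rightarrow> 'v) \<Rightarrow> 'x measure \<Rightarrow> (('v,'e) gpath \<Rightarrow> 'x set)
     \<Rightarrow> (('v,'e) gpath \<Rightarrow> 'x \<Rightarrow> 'x) \<Rightarrow> (nat \<Rightarrow> 'x \<Rightarrow> 'x)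
     \<Rightarrow> (('v,'e) gpath \<Rightarrow> 'x \<Rightarrow> complex) \<Rightarrow> bool" where
  "proj_rep r s M D t cod f \<longleftrightarrow>
     (\<forall>p. is_path r s p \<longrightarrow>
        f p \<in> L2 M \<and>
        (\<forall>A \<in> sets M. emeasure M {x \<in> D p. t p x \<in> A}
                        = (\<integral>\<^sup>+x\<in>A. ennreal ((cmod (f p x))\<^sup>2) \<partial>M)) \<and>
        \<not> (AE x in M. f p x = 0)) \<and>
     (\<forall>p q. composable r s p q \<longrightarrow>
        (AE x in M. f p x * f q (cod (plen p) x) = f (pcomp p q) x))"

text \<open>h is (a representative of) T^* xi: <T g, xi> = <g, h> for all g in L^2.\<close>
definition adjoint_value :: "'x measure \<Rightarrow> (('x \<Rightarrow> complex) \<Rightarrow> 'x \<Rightarrow> complex)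
     \<Rightarrow> ('x \<Rightarrow> complex) \<Rightarrow> ('x \<Rightarrow> complex) \<Rightarrow> bool" where
  "adjoint_value M T \<xi> h \<longleftrightarrow> h \<in> L2 M \<and>
     (\<forall>g \<in> L2 M. (LINT x|M. T g x * cnj (\<xi> x)) = (LINT x|M. g x * cnj (h x)))"

definition dense_span :: "'x measure \<Rightarrow> ('x \<Rightarrow> complex) set \<Rightarrow> bool" where
  "dense_span M S \<longleftrightarrow>
     (\<forall>g \<in> L2 M. \<forall>\<epsilon>::real. \<epsilon> > 0 \<longrightarrow>
        (\<exists>F c. finite F \<and> F \<subseteq> S \<and>
           (\<integral>\<^sup>+x. ennreal ((cmod (g x - (\<Sum>k\<in>F. c k * k x)))\<^sup>2) \<partial>M) < ennreal (\<epsilon>\<^sup>2)))"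

definition monic :: "('e \<Rightarrow> 'v) \<Rightarrow> ('e \<Rightarrow> 'v) \<Rightarrow> 'x measure \<Rightarrow> (nat \<Rightarrow> 'x \<Rightarrow> 'x)
     \<Rightarrow> (('v,'e) gpath \<Rightarrow> 'x \<Rightarrow> complex) \<Rightarrow> bool" where
  "monic r s M cod f \<longleftrightarrow>
     (\<forall>p. is_path r s p \<longrightarrow> (\<exists>g \<in> L2 M. \<not> (AE x in M. Top cod f p g x = 0))) \<and>
     (\<exists>\<xi> \<in> L2 M. dense_span M
        {Top cod f p h | p h. is_path r s p \<and> adjoint_value M (Top cod f p) \<xi> h})"

end

theory Submission
  imports Defs
begin

(* Let v lie on a cycle without entrance and suppose X \<subseteq> D_v with 0 < mu X < mu D_v.
   Splitting D_v into X and D_v - X gives a nonzero u in L^2, supported in D_v and orthogonal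
   to the vector xi whose projections T_p T_p^* xi span a dense subspace.  Each of these is
   orthogonal to u: if r(p) <> v, then f_p vanishes on D_v; if r(p) = v, then p is the only
   path of its length from v, so the range of tau_p covers D_v, f_p vanishes nowhere on D_v,
   u = T_p g for some g, and <T_p T_p^* xi, u> = conj <T_p g, xi> = conj <u, xi> = 0. *)

lemma is_path_Cons_iff:
  "is_path r s (w, e # l) \<longleftrightarrow> r e = w \<and> is_path r s (s e, l)"
proof -
  have split_nat: "(\<forall>i. Q i) \<longleftrightarrow> Q 0 \<and> (\<forall>i. Q (Suc i))" for Q :: "nat \<Rightarrow> bool"
    by (metis not0_implies_Suc)
  show ?thesis
    unfolding is_path_def by (subst split_nat) (cases l, auto)
qed

lemma no_entrance_in_edge_unique:
  assumes cyc: "is_cycle r s es" and no_ent: "\<not> has_entrance r s es"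
    and j: "j < length es" and e: "r e = r (es ! j)"
  shows "e = es ! j"
proof -
  let ?n = "length es"
  have ne: "es \<noteq> []" and path: "is_path r s (r (hd es), es)" and closed: "s (last es) = r (hd es)"
    using cyc unfolding is_cycle_def by auto
  define i where "i = (if j = 0 then ?n - 1 else j - 1)"
  have i: "i < ?n" and next_i: "Suc i mod ?n = j"
    using j ne unfolding i_def by auto
  have "s (es ! i) = r (es ! j)"
    using closed path j ne unfolding i_def is_path_def
    by (auto simp: last_conv_nth hd_conv_nth)
  then show ?thesis
    using no_ent i next_i e unfolding has_entrance_def by metis
qed

lemma no_entrance_source_on_cycle:
  assumes cyc: "is_cycle r s es" and j: "j < length es"
  shows "s (es ! j) \<in> r ` set es"
proof (cases "Suc j < length es")
  case True
  then have "s (es ! j) = r (es ! Suc j)"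
    using cyc unfolding is_cycle_def is_path_def by auto
  then show ?thesis using True by simp
next
  case False
  then have "j = length es - 1" using j by simp
  then have "s (es ! j) = r (hd es)"
    using cyc unfolding is_cycle_def by (auto simp: last_conv_nth)
  then show ?thesis using cyc unfolding is_cycle_def by simp
qed

lemma no_entrance_path_unique:
  assumes cyc: "is_cycle r s es" and no_ent: "\<not> has_entrance r s es"
  shows "w \<in> r ` set es \<Longrightarrow> is_path r s (w, l) \<Longrightarrow> is_path r s (w, l') \<Longrightarrow>
    length l = length l' \<Longrightarrow> l = l'"
proof (induction l arbitrary: w l')
  case Nil
  then show ?case by simp
next
  case (Cons e l)
  then obtain e' l'' where l': "l' = e' # l''" by (cases l') auto
  from Cons.prems(1) obtain j where j: "j < length es" "w = r (es ! j)"
    by (auto simp: in_set_conv_nth)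
  have e: "r e = w" "is_path r s (s e, l)" and e': "r e' = w" "is_path r s (s e', l'')"
    using Cons.prems(2,3) unfolding l' is_path_Cons_iff by auto
  have "e = es ! j" "e' = es ! j"
    using no_entrance_in_edge_unique[OF cyc no_ent j(1)] e(1) e'(1) j(2) by auto
  moreover have "s e \<in> r ` set es"
    using no_entrance_source_on_cycle[OF cyc j(1)] \<open>e = es ! j\<close> by simp
  ultimately show ?case
    using Cons.IH[of "s e" l''] e e' Cons.prems(4) l' by simp
qed

text \<open>On each piece \<open>C n\<close> of finite measure the measures of the a.e. disjoint sets
  \<open>A i \<inter> C n\<close> are summable, so only countably many of them are nonzero.\<close>
lemma (in sigma_finite_measure) countable_AE_disjoint_family:
  assumes sets: "\<And>i. i \<in> I \<Longrightarrow> A i \<in> sets M" and pos: "\<And>i. i \<in> I \<Longrightarrow> 0 < emeasure M (A i)"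
    and disj: "\<And>i j. i \<in> I \<Longrightarrow> j \<in> I \<Longrightarrow> i \<noteq> j \<Longrightarrow> A i \<inter> A j \<in> null_sets M"
  shows "countable I"
proof -
  obtain C :: "nat \<Rightarrow> 'a set"
    where C: "range C \<subseteq> sets M" "(\<Union>n. C n) = space M" "\<And>n. emeasure M (C n) \<noteq> \<infinity>"
    using sigma_finite by metis
  have C_fin: "C n \<in> fmeasurable M" for n
    using C by (auto intro: fmeasurableI simp: top.not_eq_extremum)
  have AC_fin: "A i \<inter> C n \<in> fmeasurable M" if "i \<in> I" for i n
    using sets[OF that] C_fin by (auto intro: fmeasurableI2[OF C_fin])
  define g where "g n i = measure M (A i \<inter> C n)" for n i
  have "countable {i \<in> I. g n i \<noteq> 0}" for n
  proof (intro summable_countable_real nonneg_bdd_above_summable_on bdd_aboveI2)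
    fix F assume "F \<in> {F. F \<subseteq> I \<and> finite F}"
    then have F: "F \<subseteq> I" "finite F" by auto
    have "pairwise (\<lambda>i j. AE x in M. x \<notin> A i \<inter> C n \<or> x \<notin> A j \<inter> C n) F"
      using F(1) by (auto simp: pairwise_def dest!: disj intro: AE_mp[OF AE_not_in])
    then have "sum (g n) F = measure M (\<Union>i\<in>F. A i \<inter> C n)"
      unfolding g_def using F AC_fin by (intro measure_UNION_AE[symmetric]) auto
    also have "\<dots> \<le> measure M (C n)"
      using F AC_fin by (intro measure_mono_fmeasurable[OF _ _ C_fin] sets.finite_UN) auto
    finally show "sum (g n) F \<le> measure M (C n)" .
  qed (simp add: g_def)
  moreover have "I \<subseteq> (\<Union>n. {i \<in> I. g n i \<noteq> 0})"
  proof
    fix i assume i: "i \<in> I"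
    have "A i = (\<Union>n. A i \<inter> C n)"
      using C(2) sets.sets_into_space[OF sets[OF i]] by blast
    then obtain n where "A i \<inter> C n \<notin> null_sets M"
      using pos[OF i] null_sets_UN[of "\<lambda>n. A i \<inter> C n" M] by force
    then have "g n i \<noteq> 0"
      using AC_fin[OF i, of n] by (auto simp: g_def measure_def fmeasurable_def enn2real_eq_0_iff)
    then show "i \<in> (\<Union>n. {i \<in> I. g n i \<noteq> 0})" using i by blast
  qed
  ultimately show ?thesis
    by (meson countable_UN countable_subset UNIV_I countableI_type)
qed

lemma borel_measurable_cnj [measurable]:
  "g \<in> borel_measurable M \<Longrightarrow> (\<lambda>x. cnj (g x)) \<in> borel_measurable M"
  by (rule measurable_compose[OF _ borel_measurable_continuous_onI])
     (auto intro: linear_continuous_on bounded_linear_cnj)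

lemma L2_iff:
  "g \<in> L2 M \<longleftrightarrow> g \<in> borel_measurable M \<and> (\<integral>\<^sup>+x. ennreal ((cmod (g x))\<^sup>2) \<partial>M) < \<infinity>"
  unfolding L2_def integrable_iff_bounded by auto

lemma L2_measurable: "g \<in> L2 M \<Longrightarrow> g \<in> borel_measurable M"
  by (simp add: L2_iff)

lemma integrable_inner_L2:
  assumes "g \<in> L2 M" "k \<in> L2 M"
  shows "integrable M (\<lambda>x. g x * cnj (k x))"
proof (rule Bochner_Integration.integrable_bound)
  show "integrable M (\<lambda>x. (cmod (g x))\<^sup>2 + (cmod (k x))\<^sup>2)"
    using assms unfolding L2_def by auto
  have [measurable]: "g \<in> borel_measurable M" "k \<in> borel_measurable M"
    using assms by (auto simp: L2_measurable)
  show "(\<lambda>x. g x * cnj (k x)) \<in> borel_measurable M"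
    by measurable
  have "cmod (g x) * cmod (k x) \<le> (cmod (g x))\<^sup>2 + (cmod (k x))\<^sup>2" for x
    using sum_squares_bound[of "cmod (g x)" "cmod (k x)"]
      mult_nonneg_nonneg[OF norm_ge_zero norm_ge_zero, of "g x" "k x"] by linarith
  then show "AE x in M. norm (g x * cnj (k x)) \<le> norm ((cmod (g x))\<^sup>2 + (cmod (k x))\<^sup>2)"
    by (simp add: norm_mult)
qed

lemma L2_indicator:
  assumes "A \<in> sets M" "emeasure M A < \<infinity>"
  shows "(indicator A :: 'a \<Rightarrow> complex) \<in> L2 M"
    and "(LINT x|M. (cmod (indicator A x :: complex))\<^sup>2) = measure M A"
proof -
  have sq: "(cmod (indicator A x :: complex))\<^sup>2 = indicator A x" for x
    by (simp add: indicator_def)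
  show "(indicator A :: 'a \<Rightarrow> complex) \<in> L2 M"
    using assms by (simp add: L2_iff sq ennreal_indicator)
  show "(LINT x|M. (cmod (indicator A x :: complex))\<^sup>2) = measure M A"
    using assms by (simp add: sq)
qed

text \<open>The witness is \<open>\<phi>\<close> if \<open>\<phi> \<perp> \<xi>\<close>, and \<open>\<langle>\<psi>, \<xi>\<rangle> \<phi> - \<langle>\<phi>, \<xi>\<rangle> \<psi>\<close> otherwise.\<close>
lemma L2_orthogonal_combination:
  fixes \<phi> \<psi> \<xi> :: "'a \<Rightarrow> complex"
  assumes L2: "\<phi> \<in> L2 M" "\<psi> \<in> L2 M" "\<xi> \<in> L2 M"
    and disj: "\<And>x. \<phi> x = 0 \<or> \<psi> x = 0"
    and pos: "0 < (LINT x|M. (cmod (\<phi> x))\<^sup>2)" "0 < (LINT x|M. (cmod (\<psi> x))\<^sup>2)"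
  obtains a b where "(\<lambda>x. a * \<phi> x + b * \<psi> x) \<in> L2 M"
    "(LINT x|M. (a * \<phi> x + b * \<psi> x) * cnj (\<xi> x)) = 0"
    "0 < (LINT x|M. (cmod (a * \<phi> x + b * \<psi> x))\<^sup>2)"
proof -
  let ?u = "\<lambda>a b x. a * \<phi> x + b * \<psi> x"
  define p where "p = (LINT x|M. \<phi> x * cnj (\<xi> x))"
  define q where "q = (LINT x|M. \<psi> x * cnj (\<xi> x))"
  have [measurable]: "\<phi> \<in> borel_measurable M" "\<psi> \<in> borel_measurable M"
    using L2 by (simp_all add: L2_measurable)
  have sq_int: "integrable M (\<lambda>x. (cmod (\<phi> x))\<^sup>2)" "integrable M (\<lambda>x. (cmod (\<psi> x))\<^sup>2)"
    using L2 unfolding L2_def by auto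
  have norm_u: "(cmod (?u a b x))\<^sup>2 = (cmod a)\<^sup>2 * (cmod (\<phi> x))\<^sup>2 + (cmod b)\<^sup>2 * (cmod (\<psi> x))\<^sup>2"
    for a b x using disj[of x] by (elim disjE) (simp_all add: norm_mult power_mult_distrib)
  have u_L2: "?u a b \<in> L2 M" for a b
    unfolding L2_def using sq_int by (simp add: norm_u)
  have inner_u: "(LINT x|M. ?u a b x * cnj (\<xi> x)) = a * p + b * q" for a b
  proof -
    have "?u a b x * cnj (\<xi> x) = a * (\<phi> x * cnj (\<xi> x)) + b * (\<psi> x * cnj (\<xi> x))" for x
      by (simp add: algebra_simps)
    then show ?thesis
      using integrable_inner_L2[OF L2(1,3)] integrable_inner_L2[OF L2(2,3)]
      by (simp add: p_def q_def)
  qed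
  have norm_int: "(LINT x|M. (cmod (?u a b x))\<^sup>2) =
      (cmod a)\<^sup>2 * (LINT x|M. (cmod (\<phi> x))\<^sup>2) + (cmod b)\<^sup>2 * (LINT x|M. (cmod (\<psi> x))\<^sup>2)" for a b
    unfolding norm_u using sq_int by simp
  show ?thesis
  proof (cases "p = 0")
    case True
    then show ?thesis
      using that[OF u_L2[of 1 0]] inner_u[of 1 0] norm_int[of 1 0] pos by simp
  next
    case False
    then have "0 < (LINT x|M. (cmod (?u q (- p) x))\<^sup>2)"
      unfolding norm_int using pos by (simp add: add_nonneg_pos)
    moreover have "(LINT x|M. ?u q (- p) x * cnj (\<xi> x)) = 0"
      unfolding inner_u by (simp add: mult.commute)
    ultimately show ?thesis
      using that[OF u_L2[of q "- p"]] by blast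
  qed
qed

lemma exists_L2_orthogonal_supported_in:
  fixes \<xi> :: "'a \<Rightarrow> complex"
  assumes \<xi>: "\<xi> \<in> L2 M" and B: "B \<in> sets M" "emeasure M B < \<infinity>"
    and X: "X \<in> sets M" "X \<subseteq> B" "0 < emeasure M X" "emeasure M X < emeasure M B"
  shows "\<exists>u\<in>L2 M. (\<forall>x. x \<notin> B \<longrightarrow> u x = 0) \<and> (LINT x|M. u x * cnj (\<xi> x)) = 0 \<and>
    0 < (LINT x|M. (cmod (u x))\<^sup>2)"
proof -
  have Y_eq: "emeasure M (B - X) = emeasure M B - emeasure M X"
    using B X by (intro emeasure_Diff) auto
  have "emeasure M (B - X) \<le> emeasure M B"
    using B by (intro emeasure_mono) auto
  then have Y_fin: "emeasure M (B - X) < \<infinity>"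
    using B(2) by order
  have X_fin: "emeasure M X < \<infinity>"
    using X(4) B(2) by order
  have Y: "B - X \<in> sets M" "0 < emeasure M (B - X)"
    using B X(1,4) by (auto simp: Y_eq diff_gr0_ennreal)
  have "X \<in> fmeasurable M" "B - X \<in> fmeasurable M"
    using X(1) X_fin Y(1) Y_fin by (auto intro!: fmeasurableI)
  then have pos: "0 < measure M X" "0 < measure M (B - X)"
    using X(3) Y(2) by (auto simp: emeasure_eq_measure2 zero_less_measure_iff)
  have disj: "indicator X x = (0::complex) \<or> indicator (B - X) x = (0::complex)" for x
    by (simp add: indicator_def)
  have pos_norm: "0 < (LINT x|M. (cmod (indicator X x :: complex))\<^sup>2)"
    "0 < (LINT x|M. (cmod (indicator (B - X) x :: complex))\<^sup>2)"
    using pos X(1) X_fin Y(1) Y_fin by (simp_all add: L2_indicator(2))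
  obtain a b where u: "(\<lambda>x. a * indicator X x + b * indicator (B - X) x) \<in> L2 M"
    "(LINT x|M. (a * indicator X x + b * indicator (B - X) x) * cnj (\<xi> x)) = 0"
    "0 < (LINT x|M. (cmod (a * indicator X x + b * indicator (B - X) x :: complex))\<^sup>2)"
    by (rule L2_orthogonal_combination[OF L2_indicator(1)[OF X(1) X_fin]
          L2_indicator(1)[OF Y(1) Y_fin] \<xi> disj pos_norm])
  moreover have "\<forall>x. x \<notin> B \<longrightarrow> a * indicator X x + b * indicator (B - X) x = (0::complex)"
    using X(2) by (auto simp: indicator_def)
  ultimately show ?thesis
    by (intro bexI[where x = "\<lambda>x. a * indicator X x + b * indicator (B - X) x"]) auto
qed

lemma L2_norm_le_dist_orthogonal:
  fixes u K :: "'a \<Rightarrow> complex"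
  assumes u: "u \<in> L2 M" and K_int: "integrable M (\<lambda>x. K x * cnj (u x))"
    and K_orth: "(LINT x|M. K x * cnj (u x)) = 0"
    and dist_int: "integrable M (\<lambda>x. (cmod (u x - K x))\<^sup>2)"
  shows "(LINT x|M. (cmod (u x))\<^sup>2) \<le> (LINT x|M. (cmod (u x - K x))\<^sup>2)"
proof -
  have Re_int: "integrable M (\<lambda>x. 2 * Re (K x * cnj (u x)))"
    using K_int by (intro integrable_mult_right integrable_Re)
  have "(cmod (u x))\<^sup>2 \<le> (cmod (u x - K x))\<^sup>2 + 2 * Re (K x * cnj (u x))" for x
    unfolding cmod_power2 by (simp add: power2_eq_square algebra_simps)
  then have "(LINT x|M. (cmod (u x))\<^sup>2) \<le> (LINT x|M. (cmod (u x - K x))\<^sup>2 + 2 * Re (K x * cnj (u x)))"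
    using u dist_int Re_int unfolding L2_def by (intro integral_mono) auto
  also have "\<dots> = (LINT x|M. (cmod (u x - K x))\<^sup>2) + 2 * Re (LINT x|M. K x * cnj (u x))"
    using dist_int Re_int K_int
    by (simp only: Bochner_Integration.integral_add integral_mult_right_zero integral_Re)
  finally show ?thesis
    by (simp add: K_orth)
qed

lemma dense_span_orthogonal_imp_zero:
  fixes u :: "'a \<Rightarrow> complex"
  assumes dense: "dense_span M S" and u: "u \<in> L2 M"
    and S: "\<And>k. k \<in> S \<Longrightarrow> k \<in> L2 M \<and> (LINT x|M. k x * cnj (u x)) = 0"
  shows "(LINT x|M. (cmod (u x))\<^sup>2) = 0"
proof (rule ccontr)
  define \<nu> where "\<nu> = (LINT x|M. (cmod (u x))\<^sup>2)"
  assume "(LINT x|M. (cmod (u x))\<^sup>2) \<noteq> 0"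
  then have \<nu>: "0 < \<nu>"
    unfolding \<nu>_def by (simp add: order_le_neq_trans)
  obtain F c where F: "finite F" "F \<subseteq> S"
    and approx: "(\<integral>\<^sup>+x. ennreal ((cmod (u x - (\<Sum>k\<in>F. c k * k x)))\<^sup>2) \<partial>M) < ennreal ((sqrt \<nu>)\<^sup>2)"
    using dense u \<nu> unfolding dense_span_def by (meson real_sqrt_gt_zero)
  define K where "K x = (\<Sum>k\<in>F. c k * k x)" for x
  have K_inner: "K x * cnj (u x) = (\<Sum>k\<in>F. c k * (k x * cnj (u x)))" for x
    unfolding K_def by (simp add: sum_distrib_right mult.assoc)
  have F_L2: "k \<in> L2 M" and F_orth: "(LINT x|M. k x * cnj (u x)) = 0" if "k \<in> F" for k
    using S F(2) that by auto
  have F_int: "integrable M (\<lambda>x. c k * (k x * cnj (u x)))" if "k \<in> F" for k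
    using F_L2[OF that] u by (intro integrable_mult_right integrable_inner_L2)
  have K_int: "integrable M (\<lambda>x. K x * cnj (u x))"
    unfolding K_inner using F_int by auto
  have K_orth: "(LINT x|M. K x * cnj (u x)) = 0"
    unfolding K_inner using F_int F_orth by (simp add: Bochner_Integration.integral_sum)
  define d where "d x = (cmod (u x - K x))\<^sup>2" for x
  have [measurable]: "u \<in> borel_measurable M" "K \<in> borel_measurable M"
    unfolding K_def using u F_L2
    by (auto simp: L2_measurable intro!: borel_measurable_sum borel_measurable_times)
  have d_nn: "(\<integral>\<^sup>+x. ennreal (d x) \<partial>M) < ennreal \<nu>"
    using approx \<nu> unfolding d_def K_def by simp
  have d_meas: "d \<in> borel_measurable M"
    unfolding d_def by measurable
  have d_int: "integrable M d"
    using d_meas d_nn unfolding integrable_iff_bounded d_def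
    by (simp add: order.strict_trans[OF _ ennreal_less_top])
  have "ennreal (LINT x|M. d x) = (\<integral>\<^sup>+x. ennreal (d x) \<partial>M)"
    by (rule nn_integral_eq_integral[symmetric, OF d_int]) (simp add: d_def)
  moreover have "0 \<le> (LINT x|M. d x)"
    by (simp add: d_def)
  ultimately have "(LINT x|M. d x) < \<nu>"
    using d_nn ennreal_less_iff by metis
  moreover have "\<nu> \<le> (LINT x|M. d x)"
    unfolding \<nu>_def d_def using u K_int K_orth d_int[unfolded d_def]
    by (rule L2_norm_le_dist_orthogonal)
  ultimately show False by simp
qed

lemma sbfsD:
  assumes "sbfs M I D t cod" "i \<in> I"
  shows "D i \<in> sets M" "0 < emeasure M (D i)" "emeasure M (D i) < \<infinity>"
    "t i \<in> measurable (restrict_space M (D i)) M" "t i ` D i \<in> sets M"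
    "pos_RN_deriv M (D i) (t i)" "AE x in M. x \<in> D i \<longrightarrow> cod (t i x) = x"
  using assms unfolding sbfs_def by simp_all

lemma sbfs_ranges_disjoint:
  assumes "sbfs M I D t cod" "i \<in> I" "j \<in> I" "i \<noteq> j"
  shows "t i ` D i \<inter> t j ` D j \<in> null_sets M"
proof (rule null_setsI)
  show "emeasure M (t i ` D i \<inter> t j ` D j) = 0"
    using assms unfolding sbfs_def by simp
  show "t i ` D i \<inter> t j ` D j \<in> sets M"
    using sbfsD(5)[OF assms(1,2)] sbfsD(5)[OF assms(1,3)] by blast
qed

lemma sbfs_AE_covered:
  "sbfs M I D t cod \<Longrightarrow> AE x in M. \<exists>i\<in>I. x \<in> t i ` D i"
  unfolding sbfs_def by simp

lemma sbfs_measurable_cod: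
  "sbfs M I D t cod \<Longrightarrow> cod \<in> measurable M M"
  unfolding sbfs_def by simp

lemma is_path_vertex: "is_path r s (w, [])"
  by (simp add: is_path_def)

locale E_sbfs_representation =
  fixes r s :: "'e \<Rightarrow> 'v" and M :: "'x measure"
    and D :: "('v,'e) gpath \<Rightarrow> 'x set" and t :: "('v,'e) gpath \<Rightarrow> 'x \<Rightarrow> 'x"
    and cod :: "nat \<Rightarrow> 'x \<Rightarrow> 'x" and f :: "('v,'e) gpath \<Rightarrow> 'x \<Rightarrow> complex"
  assumes E_sbfs: "E_sbfs r s M D t cod" and proj_rep: "proj_rep r s M D t cod f"
begin

lemma sbfs_level: "sbfs M {p. is_path r s p \<and> plen p = n} D t (cod n)"
  using E_sbfs unfolding E_sbfs_def by simp

lemma measurable_cod: "cod n \<in> measurable M M"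
  using sbfs_level by (rule sbfs_measurable_cod)

lemma t_vertex: "x \<in> D (w, []) \<Longrightarrow> t (w, []) x = x"
  using E_sbfs unfolding E_sbfs_def by simp

lemma AE_t_comp:
  "composable r s p q \<Longrightarrow>
    AE x in M. (x \<in> D (pcomp p q) \<longleftrightarrow> x \<in> D q \<and> t q x \<in> D p) \<and>
      (x \<in> D (pcomp p q) \<longrightarrow> t p (t q x) = t (pcomp p q) x)"
  using E_sbfs unfolding E_sbfs_def by (simp del: split_paired_All)

context
  fixes p assumes p: "is_path r s p"
begin

lemma sets_D: "D p \<in> sets M"
  and emeasure_D_pos: "0 < emeasure M (D p)"
  and emeasure_D_finite: "emeasure M (D p) < \<infinity>"
  and measurable_t: "t p \<in> measurable (restrict_space M (D p)) M"
  and sets_range_t: "t p ` D p \<in> sets M"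
  and pos_RN_deriv_t: "pos_RN_deriv M (D p) (t p)"
  and AE_cod_t: "AE x in M. x \<in> D p \<longrightarrow> cod (plen p) (t p x) = x"
  using sbfsD[OF sbfs_level[of "plen p"], of p] p by simp_all

lemma D_subset_space: "D p \<subseteq> space M"
  using sets_D sets.sets_into_space by blast

lemma sets_D_Int_space: "D p \<inter> space M \<in> sets M"
  using sets_D D_subset_space by (simp add: Int_absorb2)

lemma f_L2: "f p \<in> L2 M"
  and emeasure_preimage_t:
    "A \<in> sets M \<Longrightarrow> emeasure M {x \<in> D p. t p x \<in> A} = (\<integral>\<^sup>+x\<in>A. ennreal ((cmod (f p x))\<^sup>2) \<partial>M)"
  using proj_rep p unfolding proj_rep_def by (simp_all del: split_paired_All)

lemma f_measurable [measurable]: "f p \<in> borel_measurable M"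
  using f_L2 by (rule L2_measurable)

lemma preimage_t_restrict_space: "t p -` A \<inter> space (restrict_space M (D p)) = {x \<in> D p. t p x \<in> A}"
  using D_subset_space by (auto simp: space_restrict_space)

lemma sets_preimage_t: "A \<in> sets M \<Longrightarrow> {x \<in> D p. t p x \<in> A} \<in> sets M"
  using measurable_sets[OF measurable_t] sets_restrict_space_iff[OF sets_D_Int_space]
  by (metis preimage_t_restrict_space)

lemma distr_t_eq_density:
  "distr (restrict_space M (D p)) M (t p) = density M (\<lambda>x. ennreal ((cmod (f p x))\<^sup>2))"
proof (rule measure_eqI)
  fix A assume "A \<in> sets (distr (restrict_space M (D p)) M (t p))"
  then have A: "A \<in> sets M" by simp
  have "emeasure (distr (restrict_space M (D p)) M (t p)) A = emeasure M {x \<in> D p. t p x \<in> A}"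
    using measurable_t A sets_D_Int_space sets_preimage_t[OF A]
    by (simp add: emeasure_distr preimage_t_restrict_space emeasure_restrict_space)
  also have "\<dots> = emeasure (density M (\<lambda>x. ennreal ((cmod (f p x))\<^sup>2))) A"
    using A by (simp add: emeasure_preimage_t emeasure_density)
  finally show "emeasure (distr (restrict_space M (D p)) M (t p)) A =
    emeasure (density M (\<lambda>x. ennreal ((cmod (f p x))\<^sup>2))) A" .
qed simp

lemma nn_integral_t:
  assumes "\<phi> \<in> borel_measurable M"
  shows "(\<integral>\<^sup>+x. ennreal ((cmod (f p x))\<^sup>2) * \<phi> x \<partial>M) = (\<integral>\<^sup>+x. \<phi> (t p x) * indicator (D p) x \<partial>M)"
proof -
  have "(\<integral>\<^sup>+x. ennreal ((cmod (f p x))\<^sup>2) * \<phi> x \<partial>M)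
      = integral\<^sup>N (distr (restrict_space M (D p)) M (t p)) \<phi>"
    using assms by (simp add: distr_t_eq_density nn_integral_density)
  also have "\<dots> = (\<integral>\<^sup>+x. \<phi> (t p x) * indicator (D p) x \<partial>M)"
    using assms measurable_t sets_D_Int_space by (simp add: nn_integral_distr nn_integral_restrict_space)
  finally show ?thesis .
qed

lemma integral_t:
  fixes \<phi> :: "'x \<Rightarrow> complex"
  assumes "\<phi> \<in> borel_measurable M"
  shows "(LINT x|M. (cmod (f p x))\<^sup>2 *\<^sub>R \<phi> x) = (LINT x|restrict_space M (D p). \<phi> (t p x))"
proof -
  have "(LINT x|M. (cmod (f p x))\<^sup>2 *\<^sub>R \<phi> x) = integral\<^sup>L (distr (restrict_space M (D p)) M (t p)) \<phi>"
    using assms by (simp add: distr_t_eq_density integral_density)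
  also have "\<dots> = (LINT x|restrict_space M (D p). \<phi> (t p x))"
    using assms measurable_t by (simp add: integral_distr)
  finally show ?thesis .
qed

lemma null_sets_image_t:
  assumes "N \<in> null_sets M" "N \<subseteq> D p"
  shows "t p ` N \<in> null_sets M"
proof -
  obtain \<Phi> where "\<forall>A \<in> sets M. A \<subseteq> D p \<longrightarrow>
      t p ` A \<in> sets M \<and> emeasure M (t p ` A) = (\<integral>\<^sup>+x\<in>A. \<Phi> x \<partial>M)"
    using pos_RN_deriv_t unfolding pos_RN_deriv_def by blast
  then have "t p ` N \<in> sets M" "emeasure M (t p ` N) = (\<integral>\<^sup>+x\<in>N. \<Phi> x \<partial>M)"
    using assms by auto
  then show ?thesis
    using nn_integral_null_set[OF assms(1)] by (auto intro: null_setsI)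
qed

lemma AE_image_t:
  assumes "AE x in M. x \<in> D p \<longrightarrow> P x"
  shows "AE y in M. y \<in> t p ` D p \<longrightarrow> (\<exists>x\<in>D p. y = t p x \<and> P x)"
proof -
  obtain N where N: "{x \<in> space M. \<not> (x \<in> D p \<longrightarrow> P x)} \<subseteq> N" "N \<in> null_sets M"
    using assms by (auto elim!: AE_E)
  have "t p ` (N \<inter> D p) \<in> null_sets M"
    using N(2) sets_D by (intro null_sets_image_t) (auto intro: null_set_Int2)
  then show ?thesis
    by (rule AE_I') (use N(1) D_subset_space in blast)
qed

lemma AE_cod_on_range:
  "AE x in M. x \<in> t p ` D p \<longrightarrow> cod (plen p) x \<in> D p \<and> t p (cod (plen p) x) = x"
  using AE_image_t[OF AE_cod_t] by (rule AE_mp) auto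

lemma AE_f_zero_off_range: "AE x in M. x \<notin> t p ` D p \<longrightarrow> f p x = 0"
proof -
  let ?W = "space M - t p ` D p"
  have W: "?W \<in> sets M" using sets_range_t by auto
  have "{x \<in> D p. t p x \<in> ?W} = {}" by auto
  then have "(\<integral>\<^sup>+x\<in>?W. ennreal ((cmod (f p x))\<^sup>2) \<partial>M) = 0"
    using emeasure_preimage_t[OF W] by (simp only: emeasure_empty)
  then have "AE x in M. ennreal ((cmod (f p x))\<^sup>2) * indicator ?W x = 0"
    using W by (subst nn_integral_0_iff_AE[symmetric]) auto
  then show ?thesis by (rule AE_mp) (auto simp: indicator_def)
qed

lemma AE_f_nonzero_on_range: "AE x in M. x \<in> t p ` D p \<longrightarrow> f p x \<noteq> 0"
proof -
  let ?Z = "{x \<in> space M. f p x = 0}"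
  have Z: "?Z \<in> sets M" by measurable
  have "(\<integral>\<^sup>+x\<in>?Z. ennreal ((cmod (f p x))\<^sup>2) \<partial>M) = (\<integral>\<^sup>+x. 0 \<partial>M)"
    by (intro nn_integral_cong) (simp add: indicator_def)
  then have "emeasure M {x \<in> D p. t p x \<in> ?Z} = 0"
    by (simp only: emeasure_preimage_t[OF Z] nn_integral_const mult_zero_left)
  then have "AE x in M. x \<notin> {x \<in> D p. t p x \<in> ?Z}"
    using sets_preimage_t[OF Z] by (intro AE_not_in) auto
  then have "AE x in M. x \<in> D p \<longrightarrow> t p x \<notin> ?Z"
    by (rule AE_mp) auto
  from AE_image_t[OF this] AE_space show ?thesis
    by eventually_elim auto
qed

lemma Top_measurable:
  assumes [measurable]: "h \<in> borel_measurable M"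
  shows "Top cod f p h \<in> borel_measurable M"
proof -
  have [measurable]: "cod (plen p) \<in> measurable M M" by (rule measurable_cod)
  show ?thesis unfolding Top_def by measurable
qed

lemma Top_L2:
  assumes h: "h \<in> L2 M"
  shows "Top cod f p h \<in> L2 M"
  unfolding L2_iff
proof
  have [measurable]: "h \<in> borel_measurable M" "cod (plen p) \<in> measurable M M"
    using h measurable_cod by (auto simp: L2_iff)
  show "Top cod f p h \<in> borel_measurable M" by (simp add: Top_measurable)
  have "(\<integral>\<^sup>+x. ennreal ((cmod (Top cod f p h x))\<^sup>2) \<partial>M)
      = (\<integral>\<^sup>+x. ennreal ((cmod (f p x))\<^sup>2) * ennreal ((cmod (h (cod (plen p) x)))\<^sup>2) \<partial>M)"
    by (simp add: Top_def norm_mult power_mult_distrib ennreal_mult)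
  also have "\<dots> = (\<integral>\<^sup>+x. ennreal ((cmod (h (cod (plen p) (t p x))))\<^sup>2) * indicator (D p) x \<partial>M)"
    by (simp add: nn_integral_t)
  also have "\<dots> = (\<integral>\<^sup>+x. ennreal ((cmod (h x))\<^sup>2) * indicator (D p) x \<partial>M)"
    using AE_cod_t by (intro nn_integral_cong_AE) (auto simp: indicator_def)
  also have "\<dots> \<le> (\<integral>\<^sup>+x. ennreal ((cmod (h x))\<^sup>2) \<partial>M)"
    by (intro nn_integral_mono) (simp add: indicator_def)
  also have "\<dots> < \<infinity>" using h by (simp add: L2_iff)
  finally show "(\<integral>\<^sup>+x. ennreal ((cmod (Top cod f p h x))\<^sup>2) \<partial>M) < \<infinity>" .
qed

lemma inner_Top_Top:
  assumes [measurable]: "h \<in> borel_measurable M" "g \<in> borel_measurable M"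
  shows "(LINT x|M. Top cod f p h x * cnj (Top cod f p g x)) =
    (LINT x|M. indicator (D p) x *\<^sub>R (h x * cnj (g x)))"
proof -
  have [measurable]: "cod (plen p) \<in> measurable M M" by (rule measurable_cod)
  have "Top cod f p h x * cnj (Top cod f p g x) =
      (cmod (f p x))\<^sup>2 *\<^sub>R (h (cod (plen p) x) * cnj (g (cod (plen p) x)))" for x
    by (simp add: Top_def scaleR_conv_of_real complex_norm_square[symmetric] mult_ac)
  then have "(LINT x|M. Top cod f p h x * cnj (Top cod f p g x)) =
      (LINT x|restrict_space M (D p). h (cod (plen p) (t p x)) * cnj (g (cod (plen p) (t p x))))"
    by (simp add: integral_t)
  also have "\<dots> = (LINT x|restrict_space M (D p). h x * cnj (g x))"
  proof (rule integral_cong_AE)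
    show "AE x in restrict_space M (D p).
        h (cod (plen p) (t p x)) * cnj (g (cod (plen p) (t p x))) = h x * cnj (g x)"
      using AE_cod_t by (subst AE_restrict_space_iff[OF sets_D_Int_space]) auto
  qed (use measurable_t in \<open>auto intro: measurable_restrict_space1\<close>)
  also have "\<dots> = (LINT x|M. indicator (D p) x *\<^sub>R (h x * cnj (g x)))"
    by (rule integral_restrict_space[OF sets_D_Int_space])
  finally show ?thesis .
qed

lemma Top_right_inverse:
  assumes u: "u \<in> L2 M" and u0: "AE x in M. f p x = 0 \<longrightarrow> u x = 0"
  shows "\<exists>g\<in>L2 M. (\<forall>x. x \<notin> D p \<longrightarrow> g x = 0) \<and> (AE x in M. Top cod f p g x = u x)"
proof -
  have [measurable]: "u \<in> borel_measurable M" using u by (rule L2_measurable)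
  define g where "g x = (if x \<in> D p then u (t p x) / f p (t p x) else 0)" for x
  have "(\<lambda>x. u (t p x) / f p (t p x)) \<in> borel_measurable (restrict_space M (D p))"
    using measurable_t by measurable
  then have g_meas: "g \<in> borel_measurable M"
    unfolding g_def by (subst (asm) measurable_restrict_space_iff[OF sets_D_Int_space]) auto
  have "(\<integral>\<^sup>+x. ennreal ((cmod (g x))\<^sup>2) \<partial>M)
      = (\<integral>\<^sup>+x. ennreal ((cmod (u (t p x) / f p (t p x)))\<^sup>2) * indicator (D p) x \<partial>M)"
    by (intro nn_integral_cong) (simp add: g_def indicator_def)
  also have "\<dots> = (\<integral>\<^sup>+x. ennreal ((cmod (f p x))\<^sup>2) * ennreal ((cmod (u x / f p x))\<^sup>2) \<partial>M)"
    by (simp add: nn_integral_t)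
  also have "\<dots> \<le> (\<integral>\<^sup>+x. ennreal ((cmod (u x))\<^sup>2) \<partial>M)"
    by (intro nn_integral_mono)
       (auto simp: ennreal_mult[symmetric] norm_divide power_divide intro!: ennreal_leI)
  also have "\<dots> < \<infinity>" using u by (simp add: L2_iff)
  finally have g_L2: "g \<in> L2 M" using g_meas by (simp add: L2_iff)
  have "AE x in M. Top cod f p g x = u x"
    using AE_f_zero_off_range AE_cod_on_range u0
  proof eventually_elim
    case (elim x)
    then show ?case
      by (cases "f p x = 0") (auto simp: Top_def g_def)
  qed
  moreover have "\<forall>x. x \<notin> D p \<longrightarrow> g x = 0" by (simp add: g_def)
  ultimately show ?thesis using g_L2 by blast
qed

lemma Top_orthogonal_vanishing:
  assumes "AE x in M. f p x = 0 \<or> u x = 0"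
  shows "(LINT x|M. Top cod f p h x * cnj (u x)) = 0"
  using assms by (intro integral_eq_zero_AE) (auto simp: Top_def)

lemma Top_adjoint_orthogonal:
  assumes u: "u \<in> L2 M" and u0: "AE x in M. f p x = 0 \<longrightarrow> u x = 0"
    and \<xi>: "\<xi> \<in> L2 M" and orth: "(LINT x|M. u x * cnj (\<xi> x)) = 0"
    and adj: "adjoint_value M (Top cod f p) \<xi> h"
  shows "(LINT x|M. Top cod f p h x * cnj (u x)) = 0"
proof -
  obtain g where g: "g \<in> L2 M" "\<And>x. x \<notin> D p \<Longrightarrow> g x = 0" "AE x in M. Top cod f p g x = u x"
    using Top_right_inverse[OF u u0] by blast
  have h: "h \<in> L2 M"
    and adj_g: "(LINT x|M. Top cod f p g x * cnj (\<xi> x)) = (LINT x|M. g x * cnj (h x))"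
    using adj g(1) unfolding adjoint_value_def by auto
  have [measurable]: "h \<in> borel_measurable M" "g \<in> borel_measurable M" "u \<in> borel_measurable M"
    "\<xi> \<in> borel_measurable M"
    using h g(1) u \<xi> by (auto simp: L2_measurable)
  have "(LINT x|M. Top cod f p h x * cnj (u x)) = (LINT x|M. Top cod f p h x * cnj (Top cod f p g x))"
    using g(3) Top_measurable by (intro integral_cong_AE) auto
  also have "\<dots> = (LINT x|M. indicator (D p) x *\<^sub>R (h x * cnj (g x)))"
    by (simp add: inner_Top_Top)
  also have "\<dots> = (LINT x|M. h x * cnj (g x))"
    using g(2) by (intro Bochner_Integration.integral_cong) (auto simp: indicator_def)
  also have "\<dots> = (LINT x|M. cnj (g x * cnj (h x)))"
    by (simp add: mult.commute)
  also have "\<dots> = cnj (LINT x|M. g x * cnj (h x))"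
    by (rule Bochner_Integration.integral_cnj)
  also have "(LINT x|M. g x * cnj (h x)) = (LINT x|M. Top cod f p g x * cnj (\<xi> x))"
    by (rule adj_g[symmetric])
  also have "\<dots> = (LINT x|M. u x * cnj (\<xi> x))"
    using g(3) Top_measurable by (intro integral_cong_AE) auto
  finally show ?thesis using orth by simp
qed

end

lemma AE_t_in_D_vertex:
  assumes "is_path r s q"
  shows "AE x in M. x \<in> D q \<longrightarrow> t q x \<in> D (fst q, [])"
proof -
  have "composable r s (fst q, []) q"
    using assms by (simp add: composable_def is_path_def psource_def)
  moreover have "pcomp (fst q, []) q = q"
    by (simp add: pcomp_def)
  ultimately show ?thesis
    using AE_t_comp[of "(fst q, [])" q] by (auto elim: AE_mp)
qed

lemma D_vertex_disjoint:
  assumes "v \<noteq> w"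
  shows "D (v, []) \<inter> D (w, []) \<in> null_sets M"
proof -
  have "t (u, []) ` D (u, []) = D (u, [])" for u
    using t_vertex by (force simp: image_iff)
  then show ?thesis
    using sbfs_ranges_disjoint[OF sbfs_level[of 0], of "(v, [])" "(w, [])"] assms
    by (simp add: is_path_vertex plen_def)
qed

lemma AE_f_zero_on_other_vertex:
  assumes q: "is_path r s q" and ne: "fst q \<noteq> v"
  shows "AE x in M. x \<in> D (v, []) \<longrightarrow> f q x = 0"
proof -
  let ?Dv = "D (v, [])" and ?Dq = "D (fst q, [])"
  have sets: "?Dv \<in> sets M" "?Dv \<inter> ?Dq \<in> sets M"
    using sets_D[OF is_path_vertex] by auto
  have "emeasure M {x \<in> D q. t q x \<in> ?Dv} = emeasure M {x \<in> D q. t q x \<in> ?Dv \<inter> ?Dq}"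
    using AE_t_in_D_vertex[OF q] sets_preimage_t[OF q sets(1)] sets_preimage_t[OF q sets(2)]
    by (intro emeasure_eq_AE) (auto elim: AE_mp)
  also have "\<dots> = 0"
    using emeasure_preimage_t[OF q sets(2)] nn_integral_null_set[OF D_vertex_disjoint[OF ne[symmetric]]]
    by (simp add: Int_commute)
  finally have "(\<integral>\<^sup>+x. ennreal ((cmod (f q x))\<^sup>2) * indicator ?Dv x \<partial>M) = 0"
    using emeasure_preimage_t[OF q sets(1)] by simp
  then have "AE x in M. ennreal ((cmod (f q x))\<^sup>2) * indicator ?Dv x = 0"
    using f_measurable[OF q] sets(1) by (subst (asm) nn_integral_0_iff_AE) auto
  then show ?thesis
    by (rule AE_mp) (auto simp: indicator_def)
qed

lemma countable_paths_of_length: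
  assumes "sigma_finite_measure M"
  shows "countable {p. is_path r s p \<and> plen p = n}"
proof (rule sigma_finite_measure.countable_AE_disjoint_family[OF assms])
  fix p assume "p \<in> {p. is_path r s p \<and> plen p = n}"
  then have p: "is_path r s p" by simp
  then show "t p ` D p \<in> sets M" by (rule sets_range_t)
  have "{x \<in> D p. t p x \<in> t p ` D p} = D p" by auto
  then have "(\<integral>\<^sup>+x\<in>t p ` D p. ennreal ((cmod (f p x))\<^sup>2) \<partial>M) \<noteq> 0"
    using emeasure_preimage_t[OF p sets_range_t[OF p]] emeasure_D_pos[OF p] by simp
  then show "0 < emeasure M (t p ` D p)"
    using nn_integral_null_set[of "t p ` D p" M] sets_range_t[OF p]
    by (metis null_setsI not_gr_zero)
next
  fix p q assume "p \<in> {p. is_path r s p \<and> plen p = n}" "q \<in> {p. is_path r s p \<and> plen p = n}" "p \<noteq> q"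
  then show "t p ` D p \<inter> t q ` D q \<in> null_sets M"
    by (rule sbfs_ranges_disjoint[OF sbfs_level])
qed

text \<open>From a vertex of a cycle without entrance there is only one path of each length, so of
  the a.e. disjoint ranges of the paths of length \<open>plen p\<close>, which cover the space, only
  that of \<open>p\<close> can meet \<open>D (fst p, [])\<close>.\<close>
lemma AE_f_nonzero_on_cycle_vertex:
  assumes sf: "sigma_finite_measure M" and cyc: "is_cycle r s es" "\<not> has_entrance r s es"
    and p: "is_path r s p" "fst p \<in> r ` set es"
  shows "AE x in M. x \<in> D (fst p, []) \<longrightarrow> f p x \<noteq> 0"
proof -
  let ?I = "{q. is_path r s q \<and> plen q = plen p}"
  have other_vertex: "fst q \<noteq> fst p" if "q \<in> ?I" "q \<noteq> p" for q
    using no_entrance_path_unique[OF cyc p(2), of "snd p" "snd q"] that p(1)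
    by (cases p, cases q) (auto simp: plen_def)
  have "AE x in M. \<forall>q\<in>?I - {p}. x \<in> D (fst p, []) \<longrightarrow> x \<notin> t q ` D q"
  proof (subst AE_ball_countable)
    show "countable (?I - {p})"
      using countable_paths_of_length[OF sf] by (rule countable_subset[rotated]) auto
    show "\<forall>q\<in>?I - {p}. AE x in M. x \<in> D (fst p, []) \<longrightarrow> x \<notin> t q ` D q"
    proof
      fix q assume q: "q \<in> ?I - {p}"
      then have "is_path r s q" "fst q \<noteq> fst p" using other_vertex by auto
      from AE_f_zero_on_other_vertex[OF this] AE_f_nonzero_on_range[OF \<open>is_path r s q\<close>]
      show "AE x in M. x \<in> D (fst p, []) \<longrightarrow> x \<notin> t q ` D q"
        by eventually_elim auto
    qed
  qed
  with sbfs_AE_covered[OF sbfs_level[of "plen p"]] AE_f_nonzero_on_range[OF p(1)]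
  show ?thesis
    by eventually_elim blast
qed

lemma adjoint_span_orthogonal_cycle_vertex:
  assumes sf: "sigma_finite_measure M" and cyc: "is_cycle r s es" "\<not> has_entrance r s es"
    and v: "v \<in> r ` set es"
    and u: "u \<in> L2 M" "\<forall>x. x \<notin> D (v, []) \<longrightarrow> u x = 0"
    and \<xi>: "\<xi> \<in> L2 M" and orth: "(LINT x|M. u x * cnj (\<xi> x)) = 0"
    and k: "k \<in> {Top cod f p h | p h. is_path r s p \<and> adjoint_value M (Top cod f p) \<xi> h}"
  shows "k \<in> L2 M \<and> (LINT x|M. k x * cnj (u x)) = 0"
proof
  obtain p h where k_def: "k = Top cod f p h"
    and p: "is_path r s p" and adj: "adjoint_value M (Top cod f p) \<xi> h"
    using k by blast
  have "h \<in> L2 M"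
    using adj unfolding adjoint_value_def by blast
  then show "k \<in> L2 M"
    unfolding k_def by (rule Top_L2[OF p])
  show "(LINT x|M. k x * cnj (u x)) = 0"
    unfolding k_def
  proof (cases "fst p = v")
    case True
    have "AE x in M. f p x = 0 \<longrightarrow> u x = 0"
      using AE_f_nonzero_on_cycle_vertex[OF sf cyc p] True v u(2) by (auto elim: AE_mp)
    then show "(LINT x|M. Top cod f p h x * cnj (u x)) = 0"
      by (rule Top_adjoint_orthogonal[OF p u(1) _ \<xi> orth adj])
  next
    case False
    have "AE x in M. f p x = 0 \<or> u x = 0"
      using AE_f_zero_on_other_vertex[OF p False] u(2) by (auto elim: AE_mp)
    then show "(LINT x|M. Top cod f p h x * cnj (u x)) = 0"
      by (rule Top_orthogonal_vanishing[OF p])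
  qed
qed

end

theorem corollary3p12:
  fixes r s :: "'e \<Rightarrow> 'v" and M :: "'x measure"
    and D :: "('v,'e) gpath \<Rightarrow> 'x set" and t :: "('v,'e) gpath \<Rightarrow> 'x \<Rightarrow> 'x"
    and cod :: "nat \<Rightarrow> 'x \<Rightarrow> 'x" and f :: "('v,'e) gpath \<Rightarrow> 'x \<Rightarrow> complex"
  assumes "row_finite r" and "source_free r"
    and "\<exists>es. is_cycle r s es \<and> \<not> has_entrance r s es"
    and "sigma_finite_measure M"
    and "E_sbfs r s M D t cod"
    and "proj_rep r s M D t cod f"
    and "monic r s M cod f"
  shows "\<forall>v. on_cycle_without_entrance r s v \<longrightarrow>
           \<not> (\<exists>Xv \<in> sets M. Xv \<subseteq> D (v, []) \<and> 0 < emeasure M Xv \<and>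
                 emeasure M Xv < emeasure M (D (v, [])))"
proof (intro allI impI notI)
  fix v assume "on_cycle_without_entrance r s v"
    and "\<exists>Xv \<in> sets M. Xv \<subseteq> D (v, []) \<and> 0 < emeasure M Xv \<and> emeasure M Xv < emeasure M (D (v, []))"
  then obtain es X where cyc: "is_cycle r s es" "\<not> has_entrance r s es" "v \<in> r ` set es"
    and X: "X \<in> sets M" "X \<subseteq> D (v, [])" "0 < emeasure M X" "emeasure M X < emeasure M (D (v, []))"
    unfolding on_cycle_without_entrance_def by blast
  interpret E_sbfs_representation r s M D t cod f
    using assms(5,6) by unfold_locales
  obtain \<xi> where \<xi>: "\<xi> \<in> L2 M" and dense:
    "dense_span M {Top cod f p h | p h. is_path r s p \<and> adjoint_value M (Top cod f p) \<xi> h}"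
    using assms(7) unfolding monic_def by blast
  obtain u where u: "u \<in> L2 M" "\<forall>x. x \<notin> D (v, []) \<longrightarrow> u x = 0"
    "(LINT x|M. u x * cnj (\<xi> x)) = 0" "0 < (LINT x|M. (cmod (u x))\<^sup>2)"
    using exists_L2_orthogonal_supported_in[OF \<xi> sets_D[OF is_path_vertex]
        emeasure_D_finite[OF is_path_vertex] X] by blast
  have "(LINT x|M. (cmod (u x))\<^sup>2) = 0"
    using dense u(1) adjoint_span_orthogonal_cycle_vertex[OF assms(4) cyc u(1,2) \<xi> u(3)]
    by (rule dense_span_orthogonal_imp_zero)
  with u(4) show False by simp
qed

end
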